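(* Consider the synchronous network with DP-MSR (parameter $f$) under the $f$-total malicious model, with $1+\frac{T^2}{2}\le\alpha T\le 2-\frac{T^2}{2}$, on an arbitrary digraph $\mathcal{G}$. For $k\ge 1$ let $\overline{x}[k]=\max_{i\notin\mathcal{M}}\max\{\hat{x}_i[k],\hat{x}_i[k-1]\}$ and $\underline{x}[k]=\min_{i\notin\mathcal{M}}\min\{\hat{x}_i[k],\hat{x}_i[k-1]\}$. Then, for every choice of initial conditions and malicious inputs, $\overline{x}[k]$ is nonincreasing and $\underline{x}[k]$ is nondecreasing in $k\ge 1$.
   Context: Graphs. A digraph $\mathcal{G}=(\mathcal{V},\mathcal{E})$ has node set $\mathcal{V}=\{1,\dots,n\}$ and edge set without self-loops; $(j,i)\in\mathcal{E}$ means node $i$ receives information from $j$; $\mathcal{N}_i=\{j:(j,i)\in\mathcal{E}\}$. Fix $\gamma>0$ and weights $a_{ij}\in[\gamma,1)$ for $(j,i)\in\mathcal{E}$ with $\sum_{j\in\mathcal{N}_i}a_{ij}\le 1$. Agents. Each agent $i$ has position $\hat{x}_i[k]$ and velocity $v_i[k]$ with $\hat{x}_i[k+1]=\hat{x}_i[k]+Tv_i[k]+\frac{T^2}{2}u_i[k]$, $v_i[k+1]=v_i[k]+Tu_i[k]$, $T>0$. Agents in the malicious set $\mathcal{M}$ use arbitrary inputs; normal agents use $u_i[k]=-\sum_{j\in\mathcal{N}_i}a_{ij}[k](\hat{x}_i[k]-\hat{x}_j[k])-\alpha v_i[k]$, $\alpha>0$, with $a_{ij}[k]$ from DP-MSR.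 DP-MSR algorithm (parameter $f$), synchronous: at each time $k$, each normal agent $i$ considers the relative positions $\hat{x}_j[k]-\hat{x}_i[k]$, $j\in\mathcal{N}_i$. If fewer than $f$ neighbors have relative value $\ge 0$, it ignores all of those; otherwise it ignores $f$ neighbors with the largest relative values. Similarly for values $\le 0$ and the $f$ smallest. Then $a_{ij}[k]=0$ for ignored neighbors and $a_{ij}[k]=a_{ij}$ otherwise. $f$-total malicious model: $|\mathcal{M}|\le f$. *)

theory Defs
  imports Complex_Main
begin

definition neighbors :: "('a \<times> 'a) set \<Rightarrow> 'a \<Rightarrow> 'a set" where
  "neighbors E i = {j. (j, i) \<in> E}"

definition removed_large :: "nat \<Rightarrow> 'a set \<Rightarrow> ('a \<Rightarrow> real) \<Rightarrow> 'a set \<Rightarrow> bool" where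
  "removed_large f N r Ru \<longleftrightarrow>
     (let P = {j \<in> N. 0 \<le> r j} in
       (card P < f \<longrightarrow> Ru = P) \<and>
       (f \<le> card P \<longrightarrow> Ru \<subseteq> P \<and> card Ru = f \<and> (\<forall>j\<in>Ru. \<forall>l\<in>P - Ru. r l \<le> r j)))"

text \<open>The set R of neighbours ignored by DP-MSR (parameter f), given the relative
  values r j = x_j - x_i of neighbours N: the large (>= 0) side and the small (<= 0) side.\<close>
definition dpmsr_removed :: "nat \<Rightarrow> 'a set \<Rightarrow> ('a \<Rightarrow> real) \<Rightarrow> 'a set \<Rightarrow> bool" where
  "dpmsr_removed f N r R \<longleftrightarrow>
     (\<exists>Ru Rd. R = Ru \<union> Rd \<and> removed_large f N r Ru \<and> removed_large f N (\<lambda>j. - r j) Rd)"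

end

theory Submission
  imports Defs
begin

(* Eliminating the velocity by T (v[k-1] + v[k]) = 2 (x[k] - x[k-1]) expresses the position
   x_i[k+1] of a normal agent through x_i[k], x_i[k-1] and the positions of the neighbours it keeps
   at times k and k-1.  Under 1 + T^2/2 <= alpha T <= 2 - T^2/2 this is a convex combination.
   DP-MSR keeps a neighbour above x_i only if f values at least as large were discarded; among
   these f+1 agents one is normal, so every kept value lies between the extreme normal positions.
   Hence the window maximum over two consecutive steps cannot grow, and dually the minimum. *)

lemma double_integrator_consensus_update:
  fixes x0 x1 x2 v0 v1 u0 u1 W0 W1 S0 S1 T \<alpha> :: real
  assumes x1: "x1 = x0 + T * v0 + T^2 / 2 * u0"
    and v1: "v1 = v0 + T * u0"
    and x2: "x2 = x1 + T * v1 + T^2 / 2 * u1"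
    and u0: "u0 = S0 - W0 * x0 - \<alpha> * v0"
    and u1: "u1 = S1 - W1 * x1 - \<alpha> * v1"
  shows "x2 = (2 - \<alpha> * T - T^2 / 2 * W1) * x1 + T^2 / 2 * S1
            + (\<alpha> * T - 1 - T^2 / 2 * W0) * x0 + T^2 / 2 * S0"
proof -
  have mean_velocity: "T * (v0 + v1) = 2 * (x1 - x0)"
    using x1 v1 by (simp add: algebra_simps power2_eq_square)
  have "x2 - 2 * x1 + x0 = T^2 / 2 * (u0 + u1)"
    using x1 v1 x2 by (simp add: algebra_simps power2_eq_square)
  also have "\<dots> = T^2 / 2 * (S0 + S1 - W0 * x0 - W1 * x1) - \<alpha> * T * (T * (v0 + v1)) / 2"
    by (simp add: u0 u1 field_simps power2_eq_square)
  finally show ?thesis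
    unfolding mean_velocity by (simp add: field_simps)
qed

lemma convex_update_le:
  fixes x0 x1 W0 W1 S0 S1 T \<alpha> B :: real
  assumes "0 \<le> W0" "W0 \<le> 1" "0 \<le> W1" "W1 \<le> 1"
    and "1 + T^2 / 2 \<le> \<alpha> * T" "\<alpha> * T \<le> 2 - T^2 / 2"
    and x0: "x0 \<le> B" and x1: "x1 \<le> B" and S0: "S0 \<le> W0 * B" and S1: "S1 \<le> W1 * B"
  shows "(2 - \<alpha> * T - T^2 / 2 * W1) * x1 + T^2 / 2 * S1
           + (\<alpha> * T - 1 - T^2 / 2 * W0) * x0 + T^2 / 2 * S0 \<le> B"
proof -
  have h: "0 \<le> T^2 / 2" by simp
  have c1: "0 \<le> 2 - \<alpha> * T - T^2 / 2 * W1"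
    using assms(4,6) mult_left_mono[OF assms(4) h] by linarith
  have c0: "0 \<le> \<alpha> * T - 1 - T^2 / 2 * W0"
    using assms(2,5) mult_left_mono[OF assms(2) h] by linarith
  have "(2 - \<alpha> * T - T^2 / 2 * W1) * x1 + T^2 / 2 * S1
          + (\<alpha> * T - 1 - T^2 / 2 * W0) * x0 + T^2 / 2 * S0
        \<le> (2 - \<alpha> * T - T^2 / 2 * W1) * B + T^2 / 2 * (W1 * B)
          + (\<alpha> * T - 1 - T^2 / 2 * W0) * B + T^2 / 2 * (W0 * B)"
    using mult_left_mono[OF x1 c1] mult_left_mono[OF x0 c0]
      mult_left_mono[OF S1 h] mult_left_mono[OF S0 h] by linarith
  also have "\<dots> = B" by (simp add: algebra_simps)
  finally show ?thesis .
qed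

lemma removed_large_kept_dominated:
  assumes removed: "removed_large f N r Ru" and "finite N"
    and faulty: "card (N \<inter> M) \<le> f"
    and j: "j \<in> N" "j \<notin> Ru" "0 \<le> r j"
  shows "\<exists>l\<in>N - M. r j \<le> r l"
proof -
  define P where "P = {j \<in> N. 0 \<le> r j}"
  have "j \<in> P" using j unfolding P_def by simp
  with removed j have Ru: "Ru \<subseteq> P" "card Ru = f" "\<forall>l\<in>Ru. r j \<le> r l"
    unfolding removed_large_def P_def Let_def by (auto simp: not_less)
  have "finite Ru" using Ru(1) \<open>finite N\<close> unfolding P_def by (auto intro: finite_subset)
  have "insert j Ru \<subseteq> N" using Ru(1) j unfolding P_def by auto
  moreover have "\<not> insert j Ru \<subseteq> M"
  proof
    assume "insert j Ru \<subseteq> M"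
    with \<open>insert j Ru \<subseteq> N\<close> have "card (insert j Ru) \<le> card (N \<inter> M)"
      using \<open>finite N\<close> by (intro card_mono) auto
    with faulty \<open>finite Ru\<close> Ru(2) j(2) show False by simp
  qed
  ultimately obtain l where "l \<in> insert j Ru" "l \<in> N - M" by blast
  with Ru(3) show ?thesis by auto
qed

lemma dpmsr_removed_uminus:
  "dpmsr_removed f N r R \<Longrightarrow> dpmsr_removed f N (\<lambda>j. - r j) R"
  unfolding dpmsr_removed_def by (auto simp: Un_commute)

lemma dpmsr_kept_le:
  assumes "dpmsr_removed f N (\<lambda>j. y j - y i) R" "finite N" "card (N \<inter> M) \<le> f"
    and "i \<notin> M" "j \<in> N" "j \<notin> R"
    and bound: "\<forall>l. l \<notin> M \<longrightarrow> y l \<le> B"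
  shows "y j \<le> B"
proof (cases "y j \<le> y i")
  case True
  with bound \<open>i \<notin> M\<close> show ?thesis by force
next
  case False
  from assms(1) obtain Ru where "removed_large f N (\<lambda>j. y j - y i) Ru" "Ru \<subseteq> R"
    unfolding dpmsr_removed_def by auto
  with assms(2-6) False obtain l where "l \<notin> M" "y j \<le> y l"
    using removed_large_kept_dominated[where r = "\<lambda>j. y j - y i"] by force
  with bound show ?thesis by force
qed

locale dpmsr_network =
  fixes E :: "('a \<times> 'a) set"
    and a :: "'a \<Rightarrow> 'a \<Rightarrow> real"
    and T \<alpha> :: real
    and f :: nat
    and M :: "'a set"
    and x v u :: "nat \<Rightarrow> 'a \<Rightarrow> real"
    and R :: "nat \<Rightarrow> 'a \<Rightarrow> 'a set"
  assumes finite_neighbors: "finite (neighbors E i)"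
    and f_local: "card (neighbors E i \<inter> M) \<le> f"
    and weight_nonneg: "j \<in> neighbors E i \<Longrightarrow> 0 \<le> a i j"
    and weight_sum: "(\<Sum>j\<in>neighbors E i. a i j) \<le> 1"
    and alpha_lower: "1 + T^2 / 2 \<le> \<alpha> * T"
    and alpha_upper: "\<alpha> * T \<le> 2 - T^2 / 2"
    and pos_dyn: "x (Suc k) i = x k i + T * v k i + T^2 / 2 * u k i"
    and vel_dyn: "v (Suc k) i = v k i + T * u k i"
    and dpmsr: "i \<notin> M \<Longrightarrow> dpmsr_removed f (neighbors E i) (\<lambda>j. x k j - x k i) (R k i)"
    and normal_input: "i \<notin> M \<Longrightarrow>
          u k i = - (\<Sum>j\<in>neighbors E i. (if j \<in> R k i then 0 else a i j) * (x k i - x k j))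
                  - \<alpha> * v k i"
begin

definition active_weight :: "nat \<Rightarrow> 'a \<Rightarrow> 'a \<Rightarrow> real" where
  "active_weight k i j = (if j \<in> R k i then 0 else a i j)"

definition total_active_weight :: "nat \<Rightarrow> 'a \<Rightarrow> real" where
  "total_active_weight k i = (\<Sum>j\<in>neighbors E i. active_weight k i j)"

definition weighted_positions :: "nat \<Rightarrow> 'a \<Rightarrow> real" where
  "weighted_positions k i = (\<Sum>j\<in>neighbors E i. active_weight k i j * x k j)"

lemma active_weight_nonneg: "j \<in> neighbors E i \<Longrightarrow> 0 \<le> active_weight k i j"
  unfolding active_weight_def by (simp add: weight_nonneg)

lemma total_active_weight_nonneg: "0 \<le> total_active_weight k i"
  unfolding total_active_weight_def by (intro sum_nonneg active_weight_nonneg)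

lemma total_active_weight_le_1: "total_active_weight k i \<le> 1"
proof -
  have "total_active_weight k i \<le> (\<Sum>j\<in>neighbors E i. a i j)"
    unfolding total_active_weight_def active_weight_def
    by (intro sum_mono) (simp add: weight_nonneg)
  with weight_sum[of i] show ?thesis by linarith
qed

lemma normal_input_eq:
  "i \<notin> M \<Longrightarrow> u k i = weighted_positions k i - total_active_weight k i * x k i - \<alpha> * v k i"
  unfolding weighted_positions_def total_active_weight_def
  by (simp add: normal_input active_weight_def[symmetric] algebra_simps
      sum_subtractf sum_distrib_left)

lemma weighted_positions_le:
  assumes "i \<notin> M" and bound: "\<forall>l. l \<notin> M \<longrightarrow> x k l \<le> B"
  shows "weighted_positions k i \<le> total_active_weight k i * B"
  unfolding weighted_positions_def total_active_weight_def sum_distrib_right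
proof (intro sum_mono)
  fix j assume j: "j \<in> neighbors E i"
  show "active_weight k i j * x k j \<le> active_weight k i j * B"
  proof (cases "j \<in> R k i")
    case False
    with assms j have "x k j \<le> B"
      by (intro dpmsr_kept_le[OF dpmsr finite_neighbors f_local]) auto
    with active_weight_nonneg[OF j] show ?thesis by (rule mult_left_mono[rotated])
  qed (simp add: active_weight_def)
qed

lemma normal_position_le:
  assumes "i \<notin> M"
    and "\<forall>l. l \<notin> M \<longrightarrow> x k l \<le> B" "\<forall>l. l \<notin> M \<longrightarrow> x (Suc k) l \<le> B"
  shows "x (Suc (Suc k)) i \<le> B"
proof -
  have "x (Suc (Suc k)) i =
          (2 - \<alpha> * T - T^2 / 2 * total_active_weight (Suc k) i) * x (Suc k) i
          + T^2 / 2 * weighted_positions (Suc k) i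
          + (\<alpha> * T - 1 - T^2 / 2 * total_active_weight k i) * x k i
          + T^2 / 2 * weighted_positions k i"
    by (rule double_integrator_consensus_update[OF pos_dyn vel_dyn pos_dyn])
      (use normal_input_eq \<open>i \<notin> M\<close> in auto)
  also have "\<dots> \<le> B"
    using assms by (intro convex_update_le total_active_weight_nonneg total_active_weight_le_1
        alpha_lower alpha_upper weighted_positions_le) auto
  finally show ?thesis .
qed

lemma uminus_network: "dpmsr_network E a T \<alpha> f M (\<lambda>k i. - x k i) (\<lambda>k i. - v k i) (\<lambda>k i. - u k i) R"
proof unfold_locales
  fix k i assume "i \<notin> M"
  from dpmsr_removed_uminus[OF dpmsr[OF this]]
  show "dpmsr_removed f (neighbors E i) (\<lambda>j. - x k j - - x k i) (R k i)" by simp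
  have "(\<Sum>j\<in>neighbors E i. (if j \<in> R k i then 0 else a i j) * (- x k i - - x k j))
        = - (\<Sum>j\<in>neighbors E i. (if j \<in> R k i then 0 else a i j) * (x k i - x k j))"
    by (subst sum_negf[symmetric]) (simp add: algebra_simps)
  with normal_input[OF \<open>i \<notin> M\<close>]
  show "- u k i = - (\<Sum>j\<in>neighbors E i. (if j \<in> R k i then 0 else a i j) * (- x k i - - x k j))
                  - \<alpha> * - v k i" by simp
qed (use finite_neighbors f_local weight_nonneg weight_sum alpha_lower alpha_upper pos_dyn vel_dyn
  in auto)

lemma normal_position_ge:
  assumes "i \<notin> M"
    and "\<forall>l. l \<notin> M \<longrightarrow> B \<le> x k l" "\<forall>l. l \<notin> M \<longrightarrow> B \<le> x (Suc k) l"
  shows "B \<le> x (Suc (Suc k)) i"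
proof -
  interpret neg: dpmsr_network E a T \<alpha> f M "\<lambda>k i. - x k i" "\<lambda>k i. - v k i" "\<lambda>k i. - u k i" R
    by (rule uminus_network)
  have "- x (Suc (Suc k)) i \<le> - B"
    using assms by (intro neg.normal_position_le) auto
  then show ?thesis by simp
qed

lemma max_window_nonincreasing:
  assumes "finite (- M)"
  shows "Max ((\<lambda>i. max (x (Suc (Suc k)) i) (x (Suc k) i)) ` (- M))
           \<le> Max ((\<lambda>i. max (x (Suc k) i) (x k i)) ` (- M))"
proof (cases "- M = {}")
  case False
  define B where "B = Max ((\<lambda>i. max (x (Suc k) i) (x k i)) ` (- M))"
  have "max (x (Suc k) i) (x k i) \<le> B" if "i \<notin> M" for i
    unfolding B_def using that assms by (intro Max_ge) auto
  with False assms show ?thesis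
    unfolding B_def[symmetric] by (simp add: Max_le_iff normal_position_le)
qed simp

lemma min_window_nondecreasing:
  assumes "finite (- M)"
  shows "Min ((\<lambda>i. min (x (Suc k) i) (x k i)) ` (- M))
           \<le> Min ((\<lambda>i. min (x (Suc (Suc k)) i) (x (Suc k) i)) ` (- M))"
proof (cases "- M = {}")
  case False
  define b where "b = Min ((\<lambda>i. min (x (Suc k) i) (x k i)) ` (- M))"
  have "b \<le> min (x (Suc k) i) (x k i)" if "i \<notin> M" for i
    unfolding b_def using that assms by (intro Min_le) auto
  with False assms show ?thesis
    unfolding b_def[symmetric] by (simp add: Min_ge_iff normal_position_ge)
qed simp

end

theorem mainTheorem3:
  fixes E :: "('a::finite \<times> 'a) set"
    and a :: "'a \<Rightarrow> 'a \<Rightarrow> real"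
    and \<gamma> T \<alpha> :: real
    and f :: nat
    and M :: "'a set"
    and x v u :: "nat \<Rightarrow> 'a \<Rightarrow> real"
    and R :: "nat \<Rightarrow> 'a \<Rightarrow> 'a set"
  assumes no_loops: "\<forall>i. (i, i) \<notin> E"
    and gamma_pos: "\<gamma> > 0"
    and weights: "\<forall>i j. (j, i) \<in> E \<longrightarrow> \<gamma> \<le> a i j \<and> a i j < 1"
    and weight_sum: "\<forall>i. (\<Sum>j\<in>neighbors E i. a i j) \<le> 1"
    and T_pos: "T > 0" and alpha_pos: "\<alpha> > 0"
    and alpha_lower: "1 + T^2 / 2 \<le> \<alpha> * T"
    and alpha_upper: "\<alpha> * T \<le> 2 - T^2 / 2"
    and f_total: "card M \<le> f"
    and pos_dyn: "\<forall>k i. x (Suc k) i = x k i + T * v k i + T^2 / 2 * u k i"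
    and vel_dyn: "\<forall>k i. v (Suc k) i = v k i + T * u k i"
    and dpmsr: "\<forall>k i. i \<notin> M \<longrightarrow>
                   dpmsr_removed f (neighbors E i) (\<lambda>j. x k j - x k i) (R k i)"
    and normal_input: "\<forall>k i. i \<notin> M \<longrightarrow>
          u k i = - (\<Sum>j\<in>neighbors E i. (if j \<in> R k i then 0 else a i j) * (x k i - x k j))
                  - \<alpha> * v k i"
  shows "\<forall>k\<ge>1.
     Max ((\<lambda>i. max (x (Suc k) i) (x k i)) ` (- M)) \<le> Max ((\<lambda>i. max (x k i) (x (k - 1) i)) ` (- M))
   \<and> Min ((\<lambda>i. min (x k i) (x (k - 1) i)) ` (- M)) \<le> Min ((\<lambda>i. min (x (Suc k) i) (x k i)) ` (- M))"
proof -
  have "card (neighbors E i \<inter> M) \<le> f" for i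
    using f_total card_mono[of M "neighbors E i \<inter> M"] by simp
  moreover have "0 \<le> a i j" if "j \<in> neighbors E i" for i j
    using that weights gamma_pos unfolding neighbors_def by force
  ultimately interpret dpmsr_network E a T \<alpha> f M x v u R
    using weight_sum alpha_lower alpha_upper pos_dyn vel_dyn dpmsr normal_input
    by unfold_locales auto
  show ?thesis
    using max_window_nonincreasing min_window_nondecreasing
    by (auto simp: le_iff_add)
qed

end
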